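(* Let $(X,\delta,c)$ be an accepting automaton over $\Sigma$ and let $\mu\mathrm{PL}(\delta,c)$ be as in the context. Then $\mu\mathrm{PL}(\delta,c)$ is isomorphic to a preformation of languages: the map $\mathcal{U}\mapsto L(\mathcal{U})$ is an isomorphism from the state space $P(\Sigma^\ast/{\approx})$ (a complete atomic Boolean algebra) onto a preformation of languages, under which the transitions of $\mu\mathrm{PL}(\delta,c)$ correspond to language derivatives.
   Context: $\Sigma$ is a finite alphabet, $\Sigma^\ast$ the free monoid with empty word $\epsilon$, $u^r$ the reversal of $u$. An accepting automaton is $(X,\delta,c)$ with $\delta:X\to X^\Sigma$ (extended to words by $\delta(x)(\epsilon)=x$, $\delta(x)(wa)=\delta(\delta(x)(w))(a)$) and $c\subseteq X$. Define $\widehat{\delta}:P(X)\to P(X)^\Sigma$ by $\widehat{\delta}(U)(a)=\{x\mid\delta(x)(a)\in U\}$, extended to words, so $\widehat{\delta}(U)(w)=\{x\mid\delta(x)(w^r)\in U\}$. Let $\langle c\rangle=\{\widehat{\delta}(c)(w)\mid w\in\Sigma^\ast\}$ and $u\approx v$ iff $\widehat{\delta}(U)(u)=\widehat{\delta}(U)(v)$ for all $U\in\langle c\rangle$. $\mu\mathrm{PL}(\delta,c)$ has state space $P(\Sigma^\ast/{\approx})$, transition $\widehat{\sigma}(\mathcal{U})(u)=\{[w]\mid[wu^r]\in\mathcal{U}\}$ and final states $\{\mathcal{U}\mid[\epsilon]\in\mathcal{U}\}$; $L(\mathcal{U})=\{u\mid[\epsilon]\in\widehat{\sigma}(\mathcal{U})(u)\}$.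 A preformation of languages is a complete atomic Boolean subalgebra of the powerset $2^{\Sigma^\ast}$ which is closed under left derivatives $U\mapsto\{w\mid aw\in U\}$ and right derivatives $U\mapsto\{w\mid wa\in U\}$ for all $a\in\Sigma$. *)

theory Defs
  imports Main
begin

(* Words over the alphabet 'a are lists; [] is epsilon, rev is reversal. *)

definition delta_w :: "('x \<Rightarrow> 'a \<Rightarrow> 'x) \<Rightarrow> 'x \<Rightarrow> 'a list \<Rightarrow> 'x" where
  "delta_w \<delta> x w = foldl \<delta> x w"

definition hat_delta :: "('x \<Rightarrow> 'a \<Rightarrow> 'x) \<Rightarrow> 'x set \<Rightarrow> 'a list \<Rightarrow> 'x set" where
  "hat_delta \<delta> U w = {x. delta_w \<delta> x (rev w) \<in> U}"

definition gen_c :: "('x \<Rightarrow> 'a \<Rightarrow> 'x) \<Rightarrow> 'x set \<Rightarrow> 'x set set" where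
  "gen_c \<delta> c = {hat_delta \<delta> c w | w. True}"

definition approx_rel :: "('x \<Rightarrow> 'a \<Rightarrow> 'x) \<Rightarrow> 'x set \<Rightarrow> ('a list \<times> 'a list) set" where
  "approx_rel \<delta> c = {(u, v). \<forall>U \<in> gen_c \<delta> c. hat_delta \<delta> U u = hat_delta \<delta> U v}"

definition cls :: "('x \<Rightarrow> 'a \<Rightarrow> 'x) \<Rightarrow> 'x set \<Rightarrow> 'a list \<Rightarrow> 'a list set" where
  "cls \<delta> c w = approx_rel \<delta> c `` {w}"

(* the quotient Sigma^*/\<approx>; the state space of muPL is its powerset *)
definition quot :: "('x \<Rightarrow> 'a \<Rightarrow> 'x) \<Rightarrow> 'x set \<Rightarrow> 'a list set set" where
  "quot \<delta> c = (UNIV :: 'a list set) // approx_rel \<delta> c"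

definition muPL_trans :: "('x \<Rightarrow> 'a \<Rightarrow> 'x) \<Rightarrow> 'x set \<Rightarrow> 'a list set set \<Rightarrow> 'a list \<Rightarrow> 'a list set set" where
  "muPL_trans \<delta> c \<U> u = {cls \<delta> c w | w. cls \<delta> c (w @ rev u) \<in> \<U>}"

definition muPL_final :: "('x \<Rightarrow> 'a \<Rightarrow> 'x) \<Rightarrow> 'x set \<Rightarrow> 'a list set set set" where
  "muPL_final \<delta> c = {\<U>. \<U> \<subseteq> quot \<delta> c \<and> cls \<delta> c [] \<in> \<U>}"

definition muPL_lang :: "('x \<Rightarrow> 'a \<Rightarrow> 'x) \<Rightarrow> 'x set \<Rightarrow> 'a list set set \<Rightarrow> 'a list set" where
  "muPL_lang \<delta> c \<U> = {u. cls \<delta> c [] \<in> muPL_trans \<delta> c \<U> u}"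

definition lderiv :: "'a \<Rightarrow> 'a list set \<Rightarrow> 'a list set" where
  "lderiv a U = {w. a # w \<in> U}"

definition rderiv :: "'a \<Rightarrow> 'a list set \<Rightarrow> 'a list set" where
  "rderiv a U = {w. w @ [a] \<in> U}"

definition is_atom :: "'b set set \<Rightarrow> 'b set \<Rightarrow> bool" where
  "is_atom B A \<longleftrightarrow> A \<in> B \<and> A \<noteq> {} \<and> (\<forall>V \<in> B. V \<subseteq> A \<longrightarrow> V = {} \<or> V = A)"

definition complete_atomic_boolean_subalgebra :: "'b set set \<Rightarrow> bool" where
  "complete_atomic_boolean_subalgebra B \<longleftrightarrow>
     (\<forall>S \<subseteq> B. \<Union>S \<in> B) \<and>
     (\<forall>S \<subseteq> B. \<Inter>S \<in> B) \<and>
     (\<forall>U \<in> B. - U \<in> B) \<and>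
     (\<forall>U \<in> B. U = \<Union>{A. is_atom B A \<and> A \<subseteq> U})"

definition preformation :: "'a list set set \<Rightarrow> bool" where
  "preformation B \<longleftrightarrow> complete_atomic_boolean_subalgebra B \<and>
     (\<forall>U \<in> B. \<forall>a. lderiv a U \<in> B \<and> rderiv a U \<in> B)"

end

theory Submission
  imports Defs
begin

text \<open>Since \<open>\<langle>c\<rangle>\<close> is closed under \<open>hat_delta\<close>, the relation \<open>\<approx>\<close> is a congruence of the free
  monoid; hence \<open>[w] \<in> \<sigma>(\<U>)(u)\<close> iff \<open>[w u\<^sup>r] \<in> \<U>\<close>, and in particular
  \<open>L(\<U>) = {u. [u\<^sup>r] \<in> \<U>}\<close>. So \<open>L\<close> is the inverse image along the surjection \<open>u \<mapsto> [u\<^sup>r]\<close>: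
  an injective complete Boolean homomorphism whose image is the family of languages saturated
  for the congruence \<open>u \<sim> v \<longleftrightarrow> u\<^sup>r \<approx> v\<^sup>r\<close>. The saturated sets of any equivalence form a
  complete atomic Boolean algebra whose atoms are the classes, and a congruence makes them
  closed under left and right derivatives.\<close>

definition saturated_sets :: "'b rel \<Rightarrow> 'b set set" where
  "saturated_sets R = {A. (\<lambda>x. x \<in> A) respects R}"

lemma saturated_sets_iff:
  "A \<in> saturated_sets R \<longleftrightarrow> (\<forall>x y. (x, y) \<in> R \<longrightarrow> x \<in> A \<longleftrightarrow> y \<in> A)"
  unfolding saturated_sets_def congruent_def by auto

lemma is_atom_saturated_sets_class:
  assumes R: "equiv UNIV R"
  shows "is_atom (saturated_sets R) (R `` {x})"
  unfolding is_atom_def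
proof (intro conjI ballI impI)
  have "y \<in> R `` {x} \<longleftrightarrow> z \<in> R `` {x}" if "(y, z) \<in> R" for y z
    using R that unfolding equiv_def sym_def trans_def by blast
  then show "R `` {x} \<in> saturated_sets R"
    unfolding saturated_sets_iff by blast
  show "R `` {x} \<noteq> {}"
    using equiv_class_self[OF R UNIV_I] by blast
next
  fix V assume V: "V \<in> saturated_sets R" "V \<subseteq> R `` {x}"
  show "V = {} \<or> V = R `` {x}"
  proof (cases "V = {}")
    case False
    then obtain y where "y \<in> V" by blast
    then have "(x, y) \<in> R" using V(2) by blast
    have "z \<in> V" if "z \<in> R `` {x}" for z
    proof -
      have "R `` {x} = R `` {y}"
        by (rule equiv_class_eq[OF R \<open>(x, y) \<in> R\<close>])
      with that have "(y, z) \<in> R" by blast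
      with \<open>y \<in> V\<close> V(1) show "z \<in> V"
        unfolding saturated_sets_iff by blast
    qed
    with V(2) show ?thesis by blast
  qed simp
qed

lemma complete_atomic_boolean_subalgebra_saturated_sets:
  assumes R: "equiv UNIV R"
  shows "complete_atomic_boolean_subalgebra (saturated_sets R)"
  unfolding complete_atomic_boolean_subalgebra_def
proof (intro conjI allI impI ballI)
  fix S assume "S \<subseteq> saturated_sets R"
  then have "\<forall>A\<in>S. \<forall>x y. (x, y) \<in> R \<longrightarrow> x \<in> A \<longleftrightarrow> y \<in> A"
    unfolding subset_iff saturated_sets_iff by blast
  then show "\<Union>S \<in> saturated_sets R" and "\<Inter>S \<in> saturated_sets R"
    unfolding saturated_sets_iff by blast+
next
  fix U assume U: "U \<in> saturated_sets R"
  then show "- U \<in> saturated_sets R"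
    unfolding saturated_sets_iff by blast
  show "U = \<Union>{A. is_atom (saturated_sets R) A \<and> A \<subseteq> U}"
  proof
    show "U \<subseteq> \<Union>{A. is_atom (saturated_sets R) A \<and> A \<subseteq> U}"
    proof
      fix x assume "x \<in> U"
      with U have "R `` {x} \<subseteq> U"
        unfolding saturated_sets_iff by blast
      with is_atom_saturated_sets_class[OF R, of x] equiv_class_self[OF R UNIV_I, of x]
      show "x \<in> \<Union>{A. is_atom (saturated_sets R) A \<and> A \<subseteq> U}"
        by blast
    qed
  qed (auto simp: is_atom_def)
qed

lemma preformation_saturated_sets:
  assumes "equiv UNIV R"
    and Cons_cong: "\<And>u v a. (u, v) \<in> R \<Longrightarrow> (a # u, a # v) \<in> R"
    and snoc_cong: "\<And>u v a. (u, v) \<in> R \<Longrightarrow> (u @ [a], v @ [a]) \<in> R"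
  shows "preformation (saturated_sets R)"
  unfolding preformation_def
proof (intro conjI ballI allI)
  show "complete_atomic_boolean_subalgebra (saturated_sets R)"
    using complete_atomic_boolean_subalgebra_saturated_sets[OF assms(1)] .
next
  fix U a assume "U \<in> saturated_sets R"
  then show "lderiv a U \<in> saturated_sets R" and "rderiv a U \<in> saturated_sets R"
    unfolding saturated_sets_iff lderiv_def rderiv_def mem_Collect_eq
    using Cons_cong snoc_cong by blast+
qed

lemma hat_delta_append: "hat_delta \<delta> (hat_delta \<delta> U w) w' = hat_delta \<delta> U (w @ w')"
  by (simp add: hat_delta_def delta_w_def)

lemma hat_delta_in_gen_c: "U \<in> gen_c \<delta> c \<Longrightarrow> hat_delta \<delta> U w \<in> gen_c \<delta> c"
  unfolding gen_c_def by (auto simp: hat_delta_append)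

lemma equiv_approx_rel: "equiv UNIV (approx_rel \<delta> c)"
  unfolding equiv_def refl_on_def sym_def trans_def approx_rel_def by auto

lemma approx_rel_append_right:
  "(u, v) \<in> approx_rel \<delta> c \<Longrightarrow> (u @ z, v @ z) \<in> approx_rel \<delta> c"
  unfolding approx_rel_def by (auto simp: hat_delta_append[symmetric])

lemma approx_rel_append_left:
  assumes "(u, v) \<in> approx_rel \<delta> c"
  shows "(z @ u, z @ v) \<in> approx_rel \<delta> c"
proof -
  have "hat_delta \<delta> U (z @ u) = hat_delta \<delta> U (z @ v)" if "U \<in> gen_c \<delta> c" for U
    using assms hat_delta_in_gen_c[OF that, of z]
    unfolding approx_rel_def by (auto simp: hat_delta_append[symmetric])
  then show ?thesis
    unfolding approx_rel_def by blast
qed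

lemma cls_eq_iff: "cls \<delta> c u = cls \<delta> c v \<longleftrightarrow> (u, v) \<in> approx_rel \<delta> c"
  unfolding cls_def using equiv_class_eq_iff[OF equiv_approx_rel] by blast

lemma quot_eq_range_cls: "quot \<delta> c = range (cls \<delta> c)"
  unfolding quot_def cls_def quotient_def by blast

lemma cls_in_muPL_trans_iff:
  "cls \<delta> c w \<in> muPL_trans \<delta> c \<U> u \<longleftrightarrow> cls \<delta> c (w @ rev u) \<in> \<U>"
proof
  assume "cls \<delta> c w \<in> muPL_trans \<delta> c \<U> u"
  then obtain w' where "cls \<delta> c w = cls \<delta> c w'" and "cls \<delta> c (w' @ rev u) \<in> \<U>"
    unfolding muPL_trans_def by blast
  then show "cls \<delta> c (w @ rev u) \<in> \<U>"
    by (metis cls_eq_iff approx_rel_append_right)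
qed (auto simp: muPL_trans_def)

lemma muPL_lang_eq: "muPL_lang \<delta> c \<U> = {u. cls \<delta> c (rev u) \<in> \<U>}"
  unfolding muPL_lang_def using cls_in_muPL_trans_iff[of \<delta> c "[]"] by simp

lemma muPL_trans_subset_quot: "muPL_trans \<delta> c \<U> u \<subseteq> quot \<delta> c"
  unfolding muPL_trans_def quot_eq_range_cls by blast

lemma muPL_lang_muPL_trans_single:
  "muPL_lang \<delta> c (muPL_trans \<delta> c \<U> [a]) = lderiv a (muPL_lang \<delta> c \<U>)"
  unfolding muPL_lang_eq lderiv_def by (simp add: cls_in_muPL_trans_iff)

lemma muPL_lang_subset_iff:
  assumes "\<U> \<subseteq> quot \<delta> c"
  shows "\<U> \<subseteq> \<V> \<longleftrightarrow> muPL_lang \<delta> c \<U> \<subseteq> muPL_lang \<delta> c \<V>"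
proof
  assume sub: "muPL_lang \<delta> c \<U> \<subseteq> muPL_lang \<delta> c \<V>"
  show "\<U> \<subseteq> \<V>"
  proof
    fix X assume "X \<in> \<U>"
    moreover obtain w where X: "X = cls \<delta> c w"
      using \<open>X \<in> \<U>\<close> assms unfolding quot_eq_range_cls by blast
    ultimately have "rev w \<in> muPL_lang \<delta> c \<U>"
      by (simp add: muPL_lang_eq)
    with sub have "rev w \<in> muPL_lang \<delta> c \<V>"
      by blast
    then show "X \<in> \<V>"
      by (simp add: muPL_lang_eq X)
  qed
qed (auto simp: muPL_lang_eq)

lemma muPL_lang_image_Pow_quot:
  "muPL_lang \<delta> c ` Pow (quot \<delta> c) = saturated_sets (inv_image (approx_rel \<delta> c) rev)"
proof (intro set_eqI iffI)
  fix A assume "A \<in> muPL_lang \<delta> c ` Pow (quot \<delta> c)"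
  then show "A \<in> saturated_sets (inv_image (approx_rel \<delta> c) rev)"
    unfolding saturated_sets_iff inv_image_def muPL_lang_eq
    by (auto simp: cls_eq_iff[symmetric])
next
  fix A assume "A \<in> saturated_sets (inv_image (approx_rel \<delta> c) rev)"
  then have A_sat: "(rev u, rev v) \<in> approx_rel \<delta> c \<Longrightarrow> u \<in> A \<longleftrightarrow> v \<in> A" for u v
    unfolding saturated_sets_iff inv_image_def by blast
  define \<U> where "\<U> = (\<lambda>u. cls \<delta> c (rev u)) ` A"
  have "cls \<delta> c (rev u) \<in> \<U> \<longleftrightarrow> u \<in> A" for u
  proof
    assume "cls \<delta> c (rev u) \<in> \<U>"
    then obtain v where "v \<in> A" and "cls \<delta> c (rev u) = cls \<delta> c (rev v)"
      unfolding \<U>_def by blast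
    then show "u \<in> A"
      using A_sat[of u v] by (simp add: cls_eq_iff)
  qed (simp add: \<U>_def)
  then have "muPL_lang \<delta> c \<U> = A"
    unfolding muPL_lang_eq by blast
  moreover have "\<U> \<in> Pow (quot \<delta> c)"
    unfolding \<U>_def quot_eq_range_cls by blast
  ultimately show "A \<in> muPL_lang \<delta> c ` Pow (quot \<delta> c)"
    by blast
qed

lemma preformation_muPL_lang_image:
  "preformation (muPL_lang \<delta> c ` Pow (quot \<delta> c))"
  unfolding muPL_lang_image_Pow_quot
proof (rule preformation_saturated_sets)
  show "equiv UNIV (inv_image (approx_rel \<delta> c) rev)"
    using equiv_approx_rel[of \<delta> c]
    unfolding equiv_def refl_on_def sym_def trans_def inv_image_def by blast
next
  show "(u @ [a], v @ [a]) \<in> inv_image (approx_rel \<delta> c) rev"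
    if "(u, v) \<in> inv_image (approx_rel \<delta> c) rev" for u v a
    using that approx_rel_append_left[where z = "[a]"] by simp
qed (simp add: approx_rel_append_right)

theorem mainTheorem6:
  fixes \<delta> :: "'x \<Rightarrow> 'a::finite \<Rightarrow> 'x" and c :: "'x set"
  defines "S \<equiv> Pow (quot \<delta> c)"
      and "L \<equiv> muPL_lang \<delta> c"
  shows "preformation (L ` S)
    \<and> bij_betw L S (L ` S)
    \<and> (\<forall>\<U>\<in>S. \<forall>\<V>\<in>S. \<U> \<subseteq> \<V> \<longleftrightarrow> L \<U> \<subseteq> L \<V>)
    \<and> (\<forall>\<SS>\<subseteq>S. L (\<Union>\<SS>) = \<Union>(L ` \<SS>))
    \<and> (\<forall>\<U>\<in>S. L (quot \<delta> c - \<U>) = - L \<U>)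
    \<and> (\<forall>\<U>\<in>S. \<forall>a. muPL_trans \<delta> c \<U> [a] \<in> S \<and> L (muPL_trans \<delta> c \<U> [a]) = lderiv a (L \<U>))
    \<and> (\<forall>\<U>\<in>S. \<U> \<in> muPL_final \<delta> c \<longleftrightarrow> [] \<in> L \<U>)"
proof -
  have order_embedding: "\<forall>\<U>\<in>S. \<forall>\<V>\<in>S. \<U> \<subseteq> \<V> \<longleftrightarrow> L \<U> \<subseteq> L \<V>"
    unfolding S_def L_def using muPL_lang_subset_iff by blast
  then have "bij_betw L S (L ` S)"
    unfolding bij_betw_def inj_on_def by blast
  moreover have "\<forall>\<SS>\<subseteq>S. L (\<Union>\<SS>) = \<Union>(L ` \<SS>)"
    unfolding L_def muPL_lang_eq by blast
  moreover have "\<forall>\<U>\<in>S. L (quot \<delta> c - \<U>) = - L \<U>"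
    unfolding S_def L_def muPL_lang_eq quot_eq_range_cls by blast
  moreover have "\<forall>\<U>\<in>S. \<forall>a. muPL_trans \<delta> c \<U> [a] \<in> S \<and> L (muPL_trans \<delta> c \<U> [a]) = lderiv a (L \<U>)"
    unfolding S_def L_def by (simp add: muPL_trans_subset_quot muPL_lang_muPL_trans_single)
  moreover have "\<forall>\<U>\<in>S. \<U> \<in> muPL_final \<delta> c \<longleftrightarrow> [] \<in> L \<U>"
    unfolding S_def L_def muPL_final_def muPL_lang_eq by simp
  ultimately show ?thesis
    using order_embedding preformation_muPL_lang_image[of \<delta> c, folded S_def L_def]
    by (intro conjI)
qed

end
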